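(* Let $\mathcal{H}$ be a nonzero Hilbert space, $n\ge 2$, and $i,j,k\in\{1,\dots,n\}$ with $j\neq i$ and $j\neq k$. Then in $\mathcal{C}(\mathcal{H}^{\otimes n})$, $$D_{i,k}=\exists_{\mathcal{H}_j}(D_{i,j}\cap D_{j,k}).$$
   Context: $\mathcal{H}^{\otimes n}=\mathcal{H}_1\otimes\cdots\otimes\mathcal{H}_n$ with each $\mathcal{H}_m=\mathcal{H}$; $\mathcal{C}(\cdot)$ is the lattice of closed subspaces. Fix an orthonormal basis $(a_i)_{i\in I}$ of $\mathcal{H}$; every $v\in\mathcal{H}^{\otimes n}$ is uniquely $\sum_{\alpha\in I^n}\lambda_\alpha\,a_{\alpha(1)}\otimes\cdots\otimes a_{\alpha(n)}$. For $F\subseteq\{1,\dots,n\}$ let $\mathrm{Perm}_n(F)$ be the permutations of $\{1,\dots,n\}$ fixing every element outside $F$, and $D_F$ the closed subspace of all such $v$ with $\lambda_\alpha=\lambda_{\alpha\sigma}$ for all $\sigma\in\mathrm{Perm}_n(F)$ and all $\alpha$, where $\alpha\sigma=(\alpha(\sigma(1)),\dots,\alpha(\sigma(n)))$ (this is independent of the basis). $D_{i,j}=D_{\{i,j\}}$; so $D_{i,i}=\mathcal{H}^{\otimes n}$. $\exists_{\mathcal{H}_j}S$ is the smallest closed subspace containing $S$ of the form "$\mathcal{H}$ in the $j$-th factor tensored with a closed subspace $T$ of the tensor product of the remaining $n-1$ factors" (via the canonical reordering isomorphism). *)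

theory Defs
  imports "HOL-Analysis.Analysis" "HOL-Combinatorics.Permutations"
begin

text \<open>The Hilbert space H is represented concretely as l2(I) over the complex numbers,
  where the index type 'i is (the index set of) the fixed orthonormal basis (a_i).
  A vector of H^{tensor n} is its coefficient family (lambda_alpha) indexed by
  alpha in I^n; tuples alpha are extensional functions on {1..n}.\<close>

definition tuples :: "nat \<Rightarrow> (nat \<Rightarrow> 'i) set" where
  "tuples n = PiE {1..n} (\<lambda>_. UNIV)"

definition tensor_space :: "nat \<Rightarrow> ((nat \<Rightarrow> 'i) \<Rightarrow> complex) set" where
  "tensor_space n = {v. (\<forall>\<alpha>. \<alpha> \<notin> tuples n \<longrightarrow> v \<alpha> = 0) \<and>
                        (\<lambda>\<alpha>. (cmod (v \<alpha>))\<^sup>2) summable_on tuples n}"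

definition tnorm :: "nat \<Rightarrow> ((nat \<Rightarrow> 'i) \<Rightarrow> complex) \<Rightarrow> real" where
  "tnorm n v = sqrt (infsum (\<lambda>\<alpha>. (cmod (v \<alpha>))\<^sup>2) (tuples n))"

definition closed_subspace :: "nat \<Rightarrow> ((nat \<Rightarrow> 'i) \<Rightarrow> complex) set \<Rightarrow> bool" where
  "closed_subspace n S \<longleftrightarrow> S \<subseteq> tensor_space n \<and> (\<lambda>_. 0) \<in> S \<and>
     (\<forall>v\<in>S. \<forall>w\<in>S. (\<lambda>\<alpha>. v \<alpha> + w \<alpha>) \<in> S) \<and>
     (\<forall>c. \<forall>v\<in>S. (\<lambda>\<alpha>. c * v \<alpha>) \<in> S) \<and>
     (\<forall>f v. (\<forall>k. f k \<in> S) \<longrightarrow> v \<in> tensor_space n \<longrightarrow>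
        (\<lambda>k. tnorm n (\<lambda>\<alpha>. f k \<alpha> - v \<alpha>)) \<longlonglongrightarrow> 0 \<longrightarrow> v \<in> S)"

definition Perm_n :: "nat \<Rightarrow> nat set \<Rightarrow> (nat \<Rightarrow> nat) set" where
  "Perm_n n F = {\<sigma>. \<sigma> permutes {1..n} \<and> (\<forall>m\<in>{1..n} - F. \<sigma> m = m)}"

definition D_sym :: "nat \<Rightarrow> nat set \<Rightarrow> ((nat \<Rightarrow> 'i) \<Rightarrow> complex) set" where
  "D_sym n F = {v \<in> tensor_space n. \<forall>\<sigma>\<in>Perm_n n F. \<forall>\<alpha>\<in>tuples n. v \<alpha> = v (\<alpha> \<circ> \<sigma>)}"

definition D2 :: "nat \<Rightarrow> nat \<Rightarrow> nat \<Rightarrow> ((nat \<Rightarrow> 'i) \<Rightarrow> complex) set" where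
  "D2 n i j = D_sym n {i, j}"

definition drop_coord :: "nat \<Rightarrow> nat \<Rightarrow> (nat \<Rightarrow> 'i) \<Rightarrow> (nat \<Rightarrow> 'i)" where
  "drop_coord n j \<alpha> = (\<lambda>m. if m \<in> {1..n-1} then (if m < j then \<alpha> m else \<alpha> (Suc m)) else undefined)"

definition tensor_at :: "nat \<Rightarrow> nat \<Rightarrow> ('i \<Rightarrow> complex) \<Rightarrow> ((nat \<Rightarrow> 'i) \<Rightarrow> complex)
     \<Rightarrow> ((nat \<Rightarrow> 'i) \<Rightarrow> complex)" where
  "tensor_at n j x w = (\<lambda>\<alpha>. if \<alpha> \<in> tuples n then x (\<alpha> j) * w (drop_coord n j \<alpha>) else 0)"

definition l2_space :: "('i \<Rightarrow> complex) set" where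
  "l2_space = {x. (\<lambda>a. (cmod (x a))\<^sup>2) summable_on UNIV}"

definition closed_span :: "nat \<Rightarrow> ((nat \<Rightarrow> 'i) \<Rightarrow> complex) set \<Rightarrow> ((nat \<Rightarrow> 'i) \<Rightarrow> complex) set" where
  "closed_span n A = \<Inter>{S. closed_subspace n S \<and> A \<subseteq> S}"

definition cyl :: "nat \<Rightarrow> nat \<Rightarrow> ((nat \<Rightarrow> 'i) \<Rightarrow> complex) set \<Rightarrow> ((nat \<Rightarrow> 'i) \<Rightarrow> complex) set" where
  "cyl n j T = closed_span n {tensor_at n j x w | x w. x \<in> l2_space \<and> w \<in> T}"

definition is_cyl :: "nat \<Rightarrow> nat \<Rightarrow> ((nat \<Rightarrow> 'i) \<Rightarrow> complex) set \<Rightarrow> bool" where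
  "is_cyl n j C \<longleftrightarrow> (\<exists>T. closed_subspace (n - 1) T \<and> C = cyl n j T)"

text \<open>exists_{H_j} S: the intersection of all closed subspaces of the form H_j tensor T
  containing S (the smallest such, when it is itself of that form).\<close>
definition ex_H :: "nat \<Rightarrow> nat \<Rightarrow> ((nat \<Rightarrow> 'i) \<Rightarrow> complex) set \<Rightarrow> ((nat \<Rightarrow> 'i) \<Rightarrow> complex) set" where
  "ex_H n j S = \<Inter>{C. is_cyl n j C \<and> S \<subseteq> C}"

end

theory Submission
  imports Defs
begin

text \<open>
  For a basis index \<open>a\<close>, the \<open>a\<close>-slice of \<open>v \<in> H\<^sup>\<otimes>\<^sup>n\<close> is the \<open>(n-1)\<close>-tensor obtained by
  fixing the \<open>j\<close>-th index of the coefficients of \<open>v\<close> to \<open>a\<close>. The closed subspace \<open>H\<^sub>j \<otimes> T\<close>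
  consists exactly of the tensors all of whose slices lie in \<open>T\<close>: truncating the \<open>j\<close>-th index
  to finite sets approximates such a tensor by finite sums of elementary tensors \<open>e\<^sub>a \<otimes> w\<close>.
  Since \<open>j \<notin> {i, k}\<close>, the slices of \<open>D(i,k)\<close> are exactly the elements of \<open>D(i',k')\<close> on the
  remaining factors, so \<open>D(i,k) = H\<^sub>j \<otimes> D(i',k')\<close>; it contains \<open>D(i,j) \<inter> D(j,k)\<close> because
  \<open>(i k) = (i j)(j k)(i j)\<close>.

  Conversely, let \<open>H\<^sub>j \<otimes> T\<close> contain \<open>D(i,j) \<inter> D(j,k)\<close> and let \<open>w \<in> D(i',k')\<close>. Symmetrizing
  \<open>e\<^sub>a \<otimes> w\<close> over the transpositions \<open>(i j)\<close> and \<open>(k j)\<close> gives an element of \<open>D(i,j) \<inter> D(j,k)\<close>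
  whose \<open>a\<close>-slice is \<open>(1 + P\<^sub>i\<^sub>' + P\<^sub>k\<^sub>') w\<close>, where \<open>P\<^sub>p\<close> restricts the \<open>p\<close>-th index to \<open>a\<close>.
  These projections commute, so \<open>1 + P\<^sub>i\<^sub>' + P\<^sub>k\<^sub>'\<close> is invertible by a polynomial in them that
  preserves \<open>D(i',k')\<close>; hence \<open>w \<in> T\<close>. (For \<open>i = k\<close> the same works with \<open>1 + P\<^sub>i\<^sub>'\<close>.)
\<close>

abbreviation sq_coeff :: "('a \<Rightarrow> complex) \<Rightarrow> 'a \<Rightarrow> real" where
  "sq_coeff v \<alpha> \<equiv> (cmod (v \<alpha>))\<^sup>2"

section \<open>The Hilbert space of coefficient families\<close>

lemma tuples_iff: "\<alpha> \<in> tuples n \<longleftrightarrow> (\<forall>m. m \<notin> {1..n} \<longrightarrow> \<alpha> m = undefined)"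
  unfolding tuples_def by (auto simp: PiE_iff extensional_def)

lemma tensor_space_zero_outside: "v \<in> tensor_space n \<Longrightarrow> \<alpha> \<notin> tuples n \<Longrightarrow> v \<alpha> = 0"
  unfolding tensor_space_def by auto

lemma tensor_space_summable: "v \<in> tensor_space n \<Longrightarrow> sq_coeff v summable_on tuples n"
  unfolding tensor_space_def by auto

lemma tensor_spaceI:
  "(\<And>\<alpha>. \<alpha> \<notin> tuples n \<Longrightarrow> v \<alpha> = 0) \<Longrightarrow> sq_coeff v summable_on tuples n \<Longrightarrow> v \<in> tensor_space n"
  unfolding tensor_space_def by auto

lemma tensor_space_zero: "(\<lambda>_. 0) \<in> tensor_space n"
  by (rule tensor_spaceI) auto

lemma sq_cmod_add_le: "(cmod (a + b))\<^sup>2 \<le> 2 * (cmod a)\<^sup>2 + 2 * (cmod b)\<^sup>2"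
proof -
  have "(cmod (a + b))\<^sup>2 \<le> (cmod a + cmod b)\<^sup>2"
    by (simp add: power_mono norm_triangle_ineq)
  also have "\<dots> \<le> 2 * (cmod a)\<^sup>2 + 2 * (cmod b)\<^sup>2"
    by (smt (verit, best) sum_squares_bound power2_sum)
  finally show ?thesis .
qed

lemma tensor_space_add:
  assumes v: "v \<in> tensor_space n" and w: "w \<in> tensor_space n"
  shows "(\<lambda>\<alpha>. v \<alpha> + w \<alpha>) \<in> tensor_space n"
proof (rule tensor_spaceI)
  show "\<And>\<alpha>. \<alpha> \<notin> tuples n \<Longrightarrow> v \<alpha> + w \<alpha> = 0"
    using v w by (simp add: tensor_space_zero_outside)
  have "(\<lambda>\<alpha>. 2 * sq_coeff v \<alpha> + 2 * sq_coeff w \<alpha>) summable_on tuples n"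
    by (intro summable_on_add summable_on_cmult_right tensor_space_summable v w)
  then show "sq_coeff (\<lambda>\<alpha>. v \<alpha> + w \<alpha>) summable_on tuples n"
    by (rule summable_on_comparison_test) (auto simp: sq_cmod_add_le)
qed

lemma tensor_space_scale: "v \<in> tensor_space n \<Longrightarrow> (\<lambda>\<alpha>. c * v \<alpha>) \<in> tensor_space n"
proof (rule tensor_spaceI)
  assume v: "v \<in> tensor_space n"
  show "\<And>\<alpha>. \<alpha> \<notin> tuples n \<Longrightarrow> c * v \<alpha> = 0"
    using v by (simp add: tensor_space_zero_outside)
  have "(\<lambda>\<alpha>. (cmod c)\<^sup>2 * sq_coeff v \<alpha>) summable_on tuples n"
    by (intro summable_on_cmult_right tensor_space_summable v)
  then show "sq_coeff (\<lambda>\<alpha>. c * v \<alpha>) summable_on tuples n"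
    by (simp add: norm_mult power_mult_distrib)
qed

lemma tensor_space_diff:
  "v \<in> tensor_space n \<Longrightarrow> w \<in> tensor_space n \<Longrightarrow> (\<lambda>\<alpha>. v \<alpha> - w \<alpha>) \<in> tensor_space n"
  using tensor_space_add[OF _ tensor_space_scale[of w n "-1"], of v] by simp

lemma tensor_space_mask:
  assumes v: "v \<in> tensor_space n"
  shows "(\<lambda>\<alpha>. if P \<alpha> then v \<alpha> else 0) \<in> tensor_space n"
proof (rule tensor_spaceI)
  show "\<And>\<alpha>. \<alpha> \<notin> tuples n \<Longrightarrow> (if P \<alpha> then v \<alpha> else 0) = 0"
    using v by (simp add: tensor_space_zero_outside)
  show "sq_coeff (\<lambda>\<alpha>. if P \<alpha> then v \<alpha> else 0) summable_on tuples n"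
    by (rule summable_on_comparison_test[OF tensor_space_summable[OF v]]) auto
qed

lemma tnorm_nonneg: "0 \<le> tnorm n v"
  unfolding tnorm_def by (simp add: infsum_nonneg)

lemma norm_le_tnorm:
  assumes v: "v \<in> tensor_space n"
  shows "cmod (v \<alpha>) \<le> tnorm n v"
proof (cases "\<alpha> \<in> tuples n")
  case True
  have "sum (sq_coeff v) {\<alpha>} \<le> infsum (sq_coeff v) (tuples n)"
    by (rule finite_sum_le_infsum[OF tensor_space_summable[OF v]]) (use True in auto)
  then have "sqrt (sq_coeff v \<alpha>) \<le> tnorm n v"
    unfolding tnorm_def by (intro real_sqrt_le_mono) simp
  then show ?thesis by simp
next
  case False
  then show ?thesis
    using v tnorm_nonneg by (simp add: tensor_space_zero_outside)
qed

lemma tendsto_coeff_if_tnorm: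
  assumes "\<And>k. f k \<in> tensor_space n" "v \<in> tensor_space n"
    and "(\<lambda>k. tnorm n (\<lambda>\<alpha>. f k \<alpha> - v \<alpha>)) \<longlonglongrightarrow> 0"
  shows "(\<lambda>k. f k \<alpha>) \<longlonglongrightarrow> v \<alpha>"
proof -
  have "(\<lambda>k. cmod (f k \<alpha> - v \<alpha>)) \<longlonglongrightarrow> 0"
  proof (rule tendsto_sandwich[OF _ _ tendsto_const assms(3)])
    show "\<forall>\<^sub>F k in sequentially. cmod (f k \<alpha> - v \<alpha>) \<le> tnorm n (\<lambda>\<alpha>. f k \<alpha> - v \<alpha>)"
      using norm_le_tnorm[OF tensor_space_diff[OF assms(1,2)]] by simp
  qed simp
  then show ?thesis
    by (simp add: LIM_zero_cancel tendsto_norm_zero_iff)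
qed

lemma closed_subspaceD:
  assumes "closed_subspace n S"
  shows "S \<subseteq> tensor_space n" and "(\<lambda>_. 0) \<in> S"
    and "v \<in> S \<Longrightarrow> w \<in> S \<Longrightarrow> (\<lambda>\<alpha>. v \<alpha> + w \<alpha>) \<in> S"
    and "v \<in> S \<Longrightarrow> (\<lambda>\<alpha>. c * v \<alpha>) \<in> S"
    and "(\<And>k. f k \<in> S) \<Longrightarrow> v \<in> tensor_space n \<Longrightarrow>
         (\<lambda>k. tnorm n (\<lambda>\<alpha>. f k \<alpha> - v \<alpha>)) \<longlonglongrightarrow> 0 \<Longrightarrow> v \<in> S"
  using assms unfolding closed_subspace_def by blast+

definition restrict_coord :: "nat \<Rightarrow> 'i set \<Rightarrow> ((nat \<Rightarrow> 'i) \<Rightarrow> complex) \<Rightarrow> ((nat \<Rightarrow> 'i) \<Rightarrow> complex)"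
  where "restrict_coord p F v = (\<lambda>\<alpha>. if \<alpha> p \<in> F then v \<alpha> else 0)"

lemma tensor_space_restrict_coord: "v \<in> tensor_space n \<Longrightarrow> restrict_coord p F v \<in> tensor_space n"
  unfolding restrict_coord_def by (rule tensor_space_mask)

lemma tnorm_restrict_coord_approx:
  assumes v: "v \<in> tensor_space n" and e: "e > 0"
  shows "\<exists>F. finite F \<and> tnorm n (\<lambda>\<alpha>. restrict_coord p F v \<alpha> - v \<alpha>) \<le> e"
proof -
  let ?g = "sq_coeff v"
  have g: "?g summable_on tuples n" by (rule tensor_space_summable[OF v])
  obtain G where G: "finite G" "G \<subseteq> tuples n" "dist (sum ?g G) (infsum ?g (tuples n)) \<le> e\<^sup>2"
    using infsum_finite_approximation[OF g] e by (metis zero_less_power)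
  define F where "F = (\<lambda>\<alpha>. \<alpha> p) ` G"
  let ?inside = "\<lambda>\<alpha>. if \<alpha> p \<in> F then ?g \<alpha> else 0"
  let ?outside = "\<lambda>\<alpha>. if \<alpha> p \<in> F then 0 else ?g \<alpha>"
  have inside: "?inside summable_on tuples n" and outside: "?outside summable_on tuples n"
    by (rule summable_on_comparison_test[OF g]; auto)+
  have "infsum ?inside (tuples n) + infsum ?outside (tuples n) = infsum ?g (tuples n)"
    using infsum_add[OF inside outside] by (simp add: if_distrib cong: if_cong)
  moreover have "sum ?g G \<le> infsum ?inside (tuples n)"
  proof -
    have "sum ?inside G \<le> infsum ?inside (tuples n)"
      by (rule finite_sum_le_infsum[OF inside G(1,2)]) auto
    moreover have "sum ?inside G = sum ?g G" by (rule sum.cong) (auto simp: F_def)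
    ultimately show ?thesis by simp
  qed
  ultimately have "infsum ?outside (tuples n) \<le> e\<^sup>2"
    using G(3) by (simp add: dist_real_def)
  moreover have "sq_coeff (\<lambda>\<alpha>. restrict_coord p F v \<alpha> - v \<alpha>) = ?outside"
    by (auto simp: restrict_coord_def)
  ultimately have "tnorm n (\<lambda>\<alpha>. restrict_coord p F v \<alpha> - v \<alpha>) \<le> sqrt (e\<^sup>2)"
    unfolding tnorm_def using real_sqrt_le_mono by presburger
  then show ?thesis
    using G(1) e by (auto simp: F_def)
qed

section \<open>Inserting and deleting a coordinate\<close>

text \<open>\<open>drop_pos j p\<close> is the position of the factor \<open>p \<noteq> j\<close> once the \<open>j\<close>-th factor is deleted.\<close>

definition drop_pos :: "nat \<Rightarrow> nat \<Rightarrow> nat" where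
  "drop_pos j p = (if p < j then p else p - 1)"

definition insert_coord :: "nat \<Rightarrow> nat \<Rightarrow> 'i \<Rightarrow> (nat \<Rightarrow> 'i) \<Rightarrow> (nat \<Rightarrow> 'i)" where
  "insert_coord n j a \<beta> = (\<lambda>m. if m \<in> {1..n} then (if m = j then a else \<beta> (drop_pos j m)) else undefined)"

lemma drop_pos_in: "j \<in> {1..n} \<Longrightarrow> p \<in> {1..n} \<Longrightarrow> p \<noteq> j \<Longrightarrow> drop_pos j p \<in> {1..n-1}"
  by (auto simp: drop_pos_def)

lemma drop_pos_inject: "p \<noteq> j \<Longrightarrow> q \<noteq> j \<Longrightarrow> drop_pos j p = drop_pos j q \<longleftrightarrow> p = q"
  by (auto simp: drop_pos_def)

lemma insert_coord_in_tuples: "insert_coord n j a \<beta> \<in> tuples n"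
  by (simp add: tuples_iff insert_coord_def)

lemma drop_coord_in_tuples [simp]: "drop_coord n j \<alpha> \<in> tuples (n - Suc 0)"
  by (simp add: tuples_iff drop_coord_def)

lemma insert_coord_same: "j \<in> {1..n} \<Longrightarrow> insert_coord n j a \<beta> j = a"
  by (simp add: insert_coord_def)

lemma drop_insert_coord:
  "j \<in> {1..n} \<Longrightarrow> \<beta> \<in> tuples (n-1) \<Longrightarrow> drop_coord n j (insert_coord n j a \<beta>) = \<beta>"
  by (auto simp: fun_eq_iff drop_coord_def insert_coord_def drop_pos_def tuples_iff)

lemma insert_drop_coord:
  "j \<in> {1..n} \<Longrightarrow> \<alpha> \<in> tuples n \<Longrightarrow> insert_coord n j (\<alpha> j) (drop_coord n j \<alpha>) = \<alpha>"
  by (auto simp: fun_eq_iff drop_coord_def insert_coord_def drop_pos_def tuples_iff)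

lemma inj_on_insert_coord: "j \<in> {1..n} \<Longrightarrow> inj_on (insert_coord n j a) (tuples (n-1))"
  by (metis drop_insert_coord inj_onI)

lemma bij_betw_insert_coord:
  assumes j: "j \<in> {1..n}"
  shows "bij_betw (\<lambda>(a, \<beta>). insert_coord n j a \<beta>) (UNIV \<times> tuples (n-1)) (tuples n)"
  by (rule bij_betw_byWitness[where f' = "\<lambda>\<alpha>. (\<alpha> j, drop_coord n j \<alpha>)"])
     (use j in \<open>auto simp: insert_coord_same drop_insert_coord insert_drop_coord insert_coord_in_tuples\<close>)

lemma comp_transpose_in_tuples:
  "p \<in> {1..n} \<Longrightarrow> q \<in> {1..n} \<Longrightarrow> \<alpha> \<circ> Transposition.transpose p q \<in> tuples n \<longleftrightarrow> \<alpha> \<in> tuples n"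
  unfolding tuples_iff by (auto simp: Transposition.transpose_def)

lemma insert_coord_comp_transpose:
  assumes "j \<in> {1..n}" "p \<in> {1..n}" "q \<in> {1..n}" "p \<noteq> j" "q \<noteq> j"
  shows "insert_coord n j a (\<beta> \<circ> Transposition.transpose (drop_pos j p) (drop_pos j q))
       = insert_coord n j a \<beta> \<circ> Transposition.transpose p q"
proof
  fix m
  have "Transposition.transpose (drop_pos j p) (drop_pos j q) (drop_pos j m)
      = drop_pos j (Transposition.transpose p q m)" if "m \<noteq> j"
    using assms that drop_pos_inject[of m j p] drop_pos_inject[of m j q]
    by (auto simp: Transposition.transpose_def)
  then show "insert_coord n j a (\<beta> \<circ> Transposition.transpose (drop_pos j p) (drop_pos j q)) m
           = (insert_coord n j a \<beta> \<circ> Transposition.transpose p q) m"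
    using assms by (auto simp: insert_coord_def Transposition.transpose_def)
qed

section \<open>Slices and the subspaces \<open>H\<^sub>j \<otimes> T\<close>\<close>

definition slice :: "nat \<Rightarrow> nat \<Rightarrow> 'i \<Rightarrow> ((nat \<Rightarrow> 'i) \<Rightarrow> complex) \<Rightarrow> ((nat \<Rightarrow> 'i) \<Rightarrow> complex)" where
  "slice n j a v = (\<lambda>\<beta>. if \<beta> \<in> tuples (n-1) then v (insert_coord n j a \<beta>) else 0)"

lemma slice_add: "slice n j a (\<lambda>\<alpha>. v \<alpha> + w \<alpha>) = (\<lambda>\<beta>. slice n j a v \<beta> + slice n j a w \<beta>)"
  by (auto simp: slice_def)

lemma slice_diff: "slice n j a (\<lambda>\<alpha>. v \<alpha> - w \<alpha>) = (\<lambda>\<beta>. slice n j a v \<beta> - slice n j a w \<beta>)"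
  by (auto simp: slice_def)

lemma slice_scale: "slice n j a (\<lambda>\<alpha>. c * v \<alpha>) = (\<lambda>\<beta>. c * slice n j a v \<beta>)"
  by (auto simp: slice_def)

lemma slice_zero: "slice n j a (\<lambda>_. 0) = (\<lambda>_. 0)"
  by (auto simp: slice_def)

lemma slice_in_tensor_space:
  assumes j: "j \<in> {1..n}" and v: "v \<in> tensor_space n"
  shows "slice n j a v \<in> tensor_space (n-1)"
    and "tnorm (n-1) (slice n j a v) \<le> tnorm n v"
proof -
  let ?g = "sq_coeff v" and ?ins = "insert_coord n j a"
  have sub: "?ins ` tuples (n-1) \<subseteq> tuples n"
    by (auto simp: insert_coord_in_tuples)
  have on_image: "?g summable_on ?ins ` tuples (n-1)"
    by (rule summable_on_subset_banach[OF tensor_space_summable[OF v] sub])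
  have slice_eq: "sq_coeff (slice n j a v) \<beta> = (?g \<circ> ?ins) \<beta>" if "\<beta> \<in> tuples (n-1)" for \<beta>
    using that by (simp add: slice_def)
  have "(?g \<circ> ?ins) summable_on tuples (n-1)"
    using on_image summable_on_reindex[OF inj_on_insert_coord[OF j, of a], of ?g] by simp
  then have "sq_coeff (slice n j a v) summable_on tuples (n-1)"
    by (rule summable_on_cong[THEN iffD2, rotated]) (rule slice_eq)
  then show "slice n j a v \<in> tensor_space (n-1)"
    by (rule tensor_spaceI[rotated]) (simp add: slice_def)
  have "infsum (sq_coeff (slice n j a v)) (tuples (n-1)) = infsum (?g \<circ> ?ins) (tuples (n-1))"
    by (rule infsum_cong) (rule slice_eq)
  also have "\<dots> = infsum ?g (?ins ` tuples (n-1))"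
    by (rule infsum_reindex[OF inj_on_insert_coord[OF j, of a], symmetric])
  also have "\<dots> \<le> infsum ?g (tuples n)"
    by (rule infsum_mono_neutral[OF on_image tensor_space_summable[OF v]]) (use sub in force)+
  finally show "tnorm (n-1) (slice n j a v) \<le> tnorm n v"
    unfolding tnorm_def by (rule real_sqrt_le_mono)
qed

text \<open>By \<open>cyl_eq_slicewise\<close> below, \<open>slicewise n j T\<close> is \<open>H\<^sub>j \<otimes> T\<close>.\<close>

definition slicewise :: "nat \<Rightarrow> nat \<Rightarrow> ((nat \<Rightarrow> 'i) \<Rightarrow> complex) set \<Rightarrow> ((nat \<Rightarrow> 'i) \<Rightarrow> complex) set" where
  "slicewise n j T = {v \<in> tensor_space n. \<forall>a. slice n j a v \<in> T}"

lemma closed_subspace_slicewise: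
  assumes j: "j \<in> {1..n}" and T: "closed_subspace (n-1) T"
  shows "closed_subspace n (slicewise n j T)"
  unfolding closed_subspace_def
proof (intro conjI ballI allI impI)
  show "slicewise n j T \<subseteq> tensor_space n"
    by (auto simp: slicewise_def)
  show "(\<lambda>_. 0) \<in> slicewise n j T"
    using closed_subspaceD(2)[OF T] by (simp add: slicewise_def tensor_space_zero slice_zero)
  show "(\<lambda>\<alpha>. v \<alpha> + w \<alpha>) \<in> slicewise n j T" if "v \<in> slicewise n j T" "w \<in> slicewise n j T" for v w
    using that closed_subspaceD(3)[OF T] by (auto simp: slicewise_def tensor_space_add slice_add)
  show "(\<lambda>\<alpha>. c * v \<alpha>) \<in> slicewise n j T" if "v \<in> slicewise n j T" for c v
    using that closed_subspaceD(4)[OF T] by (auto simp: slicewise_def tensor_space_scale slice_scale)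
  fix f v
  assume f: "\<forall>k. f k \<in> slicewise n j T" and v: "v \<in> tensor_space n"
    and lim: "(\<lambda>k. tnorm n (\<lambda>\<alpha>. f k \<alpha> - v \<alpha>)) \<longlonglongrightarrow> 0"
  have f_tensor: "\<And>k. f k \<in> tensor_space n"
    using f by (auto simp: slicewise_def)
  have "slice n j a v \<in> T" for a
  proof (rule closed_subspaceD(5)[OF T])
    show "\<And>k. slice n j a (f k) \<in> T"
      using f by (auto simp: slicewise_def)
    show "slice n j a v \<in> tensor_space (n-1)"
      by (rule slice_in_tensor_space(1)[OF j v])
    show "(\<lambda>k. tnorm (n-1) (\<lambda>\<beta>. slice n j a (f k) \<beta> - slice n j a v \<beta>)) \<longlonglongrightarrow> 0"
    proof (rule tendsto_sandwich[OF _ _ tendsto_const lim])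
      show "\<forall>\<^sub>F k in sequentially. tnorm (n-1) (\<lambda>\<beta>. slice n j a (f k) \<beta> - slice n j a v \<beta>)
              \<le> tnorm n (\<lambda>\<alpha>. f k \<alpha> - v \<alpha>)"
        using slice_in_tensor_space(2)[OF j tensor_space_diff[OF f_tensor v]] by (simp add: slice_diff)
    qed (simp add: tnorm_nonneg)
  qed
  then show "v \<in> slicewise n j T"
    using v by (simp add: slicewise_def)
qed

lemma indicator_in_l2_space: "(indicator {a} :: 'i \<Rightarrow> complex) \<in> l2_space"
  unfolding l2_space_def mem_Collect_eq
  by (rule finite_nonzero_values_imp_summable_on) (rule finite_subset[of _ "{a}"], auto simp: indicator_def)

lemma tensor_at_in_tensor_space:
  assumes j: "j \<in> {1..n}" and x: "x \<in> l2_space" and w: "w \<in> tensor_space (n-1)"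
  shows "tensor_at n j x w \<in> tensor_space n"
proof (rule tensor_spaceI)
  show "\<And>\<alpha>. \<alpha> \<notin> tuples n \<Longrightarrow> tensor_at n j x w \<alpha> = 0"
    by (simp add: tensor_at_def)
  let ?ins = "\<lambda>(a, \<beta>). insert_coord n j a \<beta>"
  have "(\<lambda>(a, \<beta>). sq_coeff x a * sq_coeff w \<beta>) summable_on UNIV \<times> tuples (n-1)"
  proof (rule summable_on_SigmaI[where g = "\<lambda>a. sq_coeff x a * infsum (sq_coeff w) (tuples (n-1))"])
    show "((\<lambda>\<beta>. case (a, \<beta>) of (a, \<beta>) \<Rightarrow> sq_coeff x a * sq_coeff w \<beta>)
           has_sum sq_coeff x a * infsum (sq_coeff w) (tuples (n-1))) (tuples (n-1))" for a
      using has_sum_cmult_right[OF has_sum_infsum[OF tensor_space_summable[OF w]]] by simp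
    show "(\<lambda>a. sq_coeff x a * infsum (sq_coeff w) (tuples (n-1))) summable_on UNIV"
      using x by (intro summable_on_cmult_left) (simp add: l2_space_def)
  qed simp
  moreover have "(\<lambda>(a, \<beta>). sq_coeff x a * sq_coeff w \<beta>) p = (sq_coeff (tensor_at n j x w) \<circ> ?ins) p"
    if "p \<in> UNIV \<times> tuples (n-1)" for p
    using j that by (auto simp: tensor_at_def insert_coord_in_tuples insert_coord_same drop_insert_coord
        norm_mult power_mult_distrib)
  ultimately have "(sq_coeff (tensor_at n j x w) \<circ> ?ins) summable_on UNIV \<times> tuples (n-1)"
    by (rule summable_on_cong[THEN iffD1, rotated])
  then show "sq_coeff (tensor_at n j x w) summable_on tuples n"
    using summable_on_reindex_bij_betw[OF bij_betw_insert_coord[OF j], of "sq_coeff (tensor_at n j x w)"]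
    by (simp add: comp_def)
qed

lemma slice_tensor_at:
  assumes j: "j \<in> {1..n}" and w: "w \<in> tensor_space (n-1)"
  shows "slice n j a (tensor_at n j x w) = (\<lambda>\<beta>. x a * w \<beta>)"
  using j tensor_space_zero_outside[OF w]
  by (auto simp: slice_def tensor_at_def insert_coord_in_tuples insert_coord_same drop_insert_coord)

lemma cyl_subset_slicewise:
  assumes j: "j \<in> {1..n}" and T: "closed_subspace (n-1) T"
  shows "cyl n j T \<subseteq> slicewise n j T"
proof -
  have "{tensor_at n j x w | x w. x \<in> l2_space \<and> w \<in> T} \<subseteq> slicewise n j T"
    using j closed_subspaceD(1,4)[OF T]
    by (auto simp: slicewise_def tensor_at_in_tensor_space slice_tensor_at)
  then show ?thesis
    unfolding cyl_def closed_span_def using closed_subspace_slicewise[OF j T] by blast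
qed

lemma restrict_coord_insert:
  assumes j: "j \<in> {1..n}" and v: "v \<in> tensor_space n" and a: "a \<notin> F"
  shows "restrict_coord j (insert a F) v
       = (\<lambda>\<alpha>. restrict_coord j F v \<alpha> + tensor_at n j (indicator {a}) (slice n j a v) \<alpha>)"
proof
  fix \<alpha>
  show "restrict_coord j (insert a F) v \<alpha>
      = restrict_coord j F v \<alpha> + tensor_at n j (indicator {a}) (slice n j a v) \<alpha>"
  proof (cases "\<alpha> \<in> tuples n")
    case True
    then have "slice n j (\<alpha> j) v (drop_coord n j \<alpha>) = v \<alpha>"
      using insert_drop_coord[OF j True] by (simp add: slice_def)
    then show ?thesis
      using True a by (auto simp: restrict_coord_def tensor_at_def indicator_def)
  next
    case False
    then show ?thesis
      using tensor_space_zero_outside[OF v False] by (simp add: restrict_coord_def tensor_at_def)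
  qed
qed

lemma restrict_coord_in_closed_subspace:
  assumes j: "j \<in> {1..n}" and v: "v \<in> slicewise n j T" and S: "closed_subspace n S"
    and gens: "{tensor_at n j x w | x w. x \<in> l2_space \<and> w \<in> T} \<subseteq> S" and F: "finite F"
  shows "restrict_coord j F v \<in> S"
  using F
proof (induction F rule: finite_induct)
  case empty
  have "restrict_coord j {} v = (\<lambda>_. 0)"
    by (simp add: restrict_coord_def)
  then show ?case
    using closed_subspaceD(2)[OF S] by simp
next
  case (insert a F)
  have v_tensor: "v \<in> tensor_space n" and "slice n j a v \<in> T"
    using v by (auto simp: slicewise_def)
  then have "tensor_at n j (indicator {a}) (slice n j a v) \<in> {tensor_at n j x w | x w. x \<in> l2_space \<and> w \<in> T}"
    using indicator_in_l2_space[of a] by (intro CollectI exI[of _ "indicator {a}"] exI[of _ "slice n j a v"]) simp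
  then have "tensor_at n j (indicator {a}) (slice n j a v) \<in> S"
    using gens by blast
  then show ?case
    using insert closed_subspaceD(3)[OF S] restrict_coord_insert[OF j v_tensor insert(2)] by simp
qed

lemma slicewise_subset_cyl:
  assumes j: "j \<in> {1..n}"
  shows "slicewise n j T \<subseteq> cyl n j T"
proof
  fix v assume v: "v \<in> slicewise n j T"
  then have v_tensor: "v \<in> tensor_space n"
    by (simp add: slicewise_def)
  have "\<forall>k. \<exists>F. finite F \<and> tnorm n (\<lambda>\<alpha>. restrict_coord j F v \<alpha> - v \<alpha>) \<le> inverse (real (Suc k))"
    using tnorm_restrict_coord_approx[OF v_tensor] by simp
  then obtain F where F_approx:
    "\<forall>k. finite (F k) \<and> tnorm n (\<lambda>\<alpha>. restrict_coord j (F k) v \<alpha> - v \<alpha>) \<le> inverse (real (Suc k))"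
    by (rule choice[THEN exE])
  then have F: "\<And>k. finite (F k)"
    and close: "\<And>k. tnorm n (\<lambda>\<alpha>. restrict_coord j (F k) v \<alpha> - v \<alpha>) \<le> inverse (real (Suc k))"
    by auto
  have lim: "(\<lambda>k. tnorm n (\<lambda>\<alpha>. restrict_coord j (F k) v \<alpha> - v \<alpha>)) \<longlonglongrightarrow> 0"
  proof (rule tendsto_sandwich[OF _ _ tendsto_const LIMSEQ_inverse_real_of_nat])
    show "\<forall>\<^sub>F k in sequentially. tnorm n (\<lambda>\<alpha>. restrict_coord j (F k) v \<alpha> - v \<alpha>) \<le> inverse (real (Suc k))"
      using close by (intro always_eventually allI)
  qed (simp add: tnorm_nonneg)
  show "v \<in> cyl n j T"
    unfolding cyl_def closed_span_def
  proof (intro InterI, clarify)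
    fix S assume S: "closed_subspace n S"
      and gens: "{tensor_at n j x w | x w. x \<in> l2_space \<and> w \<in> T} \<subseteq> S"
    show "v \<in> S"
      using closed_subspaceD(5)[OF S restrict_coord_in_closed_subspace[OF j v S gens F] v_tensor lim] .
  qed
qed

lemma cyl_eq_slicewise: "j \<in> {1..n} \<Longrightarrow> closed_subspace (n-1) T \<Longrightarrow> cyl n j T = slicewise n j T"
  using cyl_subset_slicewise slicewise_subset_cyl by (metis subset_antisym)

lemma is_cyl_slicewise: "j \<in> {1..n} \<Longrightarrow> closed_subspace (n-1) T \<Longrightarrow> is_cyl n j (slicewise n j T)"
  unfolding is_cyl_def by (metis cyl_eq_slicewise)

lemma ex_H_eq_slicewise:
  fixes T\<^sub>0 :: "((nat \<Rightarrow> 'i) \<Rightarrow> complex) set"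
  assumes j: "j \<in> {1..n}" and T\<^sub>0: "closed_subspace (n-1) T\<^sub>0" and S: "S \<subseteq> slicewise n j T\<^sub>0"
    and least: "\<And>T. closed_subspace (n-1) T \<Longrightarrow> S \<subseteq> slicewise n j T \<Longrightarrow> T\<^sub>0 \<subseteq> T"
  shows "ex_H n j S = slicewise n j T\<^sub>0"
proof
  show "ex_H n j S \<subseteq> slicewise n j T\<^sub>0"
    unfolding ex_H_def using is_cyl_slicewise[OF j T\<^sub>0] S by blast
  show "slicewise n j T\<^sub>0 \<subseteq> ex_H n j S"
    unfolding ex_H_def
  proof (rule Inter_greatest)
    fix C :: "((nat \<Rightarrow> 'i) \<Rightarrow> complex) set"
    assume "C \<in> {C. is_cyl n j C \<and> S \<subseteq> C}"
    then have C_cyl: "is_cyl n j C" and S_C: "S \<subseteq> C"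
      by auto
    obtain T where T: "closed_subspace (n-1) T" and "C = cyl n j T"
      using C_cyl unfolding is_cyl_def by blast
    then have C: "C = slicewise n j T"
      using cyl_eq_slicewise[OF j T] by simp
    have "T\<^sub>0 \<subseteq> T"
      using least T S_C C by blast
    then show "slicewise n j T\<^sub>0 \<subseteq> C"
      unfolding C slicewise_def by blast
  qed
qed

section \<open>The subspaces \<open>D(p,q)\<close>\<close>

lemma Perm_n_pair:
  assumes "p \<in> {1..n}" "q \<in> {1..n}"
  shows "Perm_n n {p, q} = {id, Transposition.transpose p q}"
proof -
  have "\<sigma> \<in> Perm_n n {p, q} \<longleftrightarrow> \<sigma> permutes {p, q}" for \<sigma>
  proof
    assume "\<sigma> \<in> Perm_n n {p, q}"
    then have perm: "\<sigma> permutes {1..n}" and fixed: "\<forall>m\<in>{1..n} - {p, q}. \<sigma> m = m"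
      by (auto simp: Perm_n_def)
    have "\<sigma> m = m" if "m \<notin> {p, q}" for m
      using that fixed permutes_not_in[OF perm] by (cases "m \<in> {1..n}") auto
    then show "\<sigma> permutes {p, q}"
      using perm unfolding permutes_def by blast
  next
    assume "\<sigma> permutes {p, q}"
    then show "\<sigma> \<in> Perm_n n {p, q}"
      using assms by (auto simp: Perm_n_def intro: permutes_subset dest: permutes_not_in)
  qed
  then show ?thesis
    by (auto simp: permutes_doubleton_iff)
qed

lemma D2_iff:
  assumes "p \<in> {1..n}" "q \<in> {1..n}"
  shows "v \<in> D2 n p q \<longleftrightarrow>
    v \<in> tensor_space n \<and> (\<forall>\<alpha>\<in>tuples n. v \<alpha> = v (\<alpha> \<circ> Transposition.transpose p q))"
  unfolding D2_def D_sym_def Perm_n_pair[OF assms] by auto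

lemma D2_same: "p \<in> {1..m} \<Longrightarrow> D2 m p p = tensor_space m"
  by (auto simp: D2_iff)

lemma tensor_space_comp_transpose:
  assumes v: "v \<in> tensor_space n" and p: "p \<in> {1..n}" and q: "q \<in> {1..n}"
  shows "(\<lambda>\<alpha>. v (\<alpha> \<circ> Transposition.transpose p q)) \<in> tensor_space n"
proof (rule tensor_spaceI)
  let ?t = "Transposition.transpose p q"
  show "\<And>\<alpha>. \<alpha> \<notin> tuples n \<Longrightarrow> v (\<alpha> \<circ> ?t) = 0"
    using comp_transpose_in_tuples[OF p q] tensor_space_zero_outside[OF v] by blast
  have "bij_betw (\<lambda>\<alpha>. \<alpha> \<circ> ?t) (tuples n) (tuples n)"
    by (rule bij_betw_byWitness[where f' = "\<lambda>\<alpha>. \<alpha> \<circ> ?t"])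
       (auto simp: comp_assoc comp_transpose_in_tuples[OF p q])
  then show "sq_coeff (\<lambda>\<alpha>. v (\<alpha> \<circ> ?t)) summable_on tuples n"
    using summable_on_reindex_bij_betw[of _ _ _ "sq_coeff v"] tensor_space_summable[OF v] by blast
qed

lemma closed_subspace_D2:
  assumes p: "p \<in> {1..m}" and q: "q \<in> {1..m}"
  shows "closed_subspace m (D2 m p q)"
  unfolding closed_subspace_def
proof (intro conjI ballI allI impI)
  let ?t = "Transposition.transpose p q"
  show "D2 m p q \<subseteq> tensor_space m" "(\<lambda>_. 0) \<in> D2 m p q"
    by (auto simp: D2_iff[OF p q] tensor_space_zero)
  show "(\<lambda>\<alpha>. v \<alpha> + w \<alpha>) \<in> D2 m p q" if "v \<in> D2 m p q" "w \<in> D2 m p q" for v w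
    using that by (simp add: D2_iff[OF p q] tensor_space_add)
  show "(\<lambda>\<alpha>. c * v \<alpha>) \<in> D2 m p q" if "v \<in> D2 m p q" for c v
    using that by (simp add: D2_iff[OF p q] tensor_space_scale)
  fix f v
  assume f: "\<forall>k. f k \<in> D2 m p q" and v: "v \<in> tensor_space m"
    and lim: "(\<lambda>k. tnorm m (\<lambda>\<alpha>. f k \<alpha> - v \<alpha>)) \<longlonglongrightarrow> 0"
  have f_tensor: "\<And>k. f k \<in> tensor_space m"
    and f_sym: "\<And>k \<alpha>. \<alpha> \<in> tuples m \<Longrightarrow> f k \<alpha> = f k (\<alpha> \<circ> ?t)"
    using f by (auto simp: D2_iff[OF p q])
  have "v \<alpha> = v (\<alpha> \<circ> ?t)" if "\<alpha> \<in> tuples m" for \<alpha>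
    using LIMSEQ_unique[OF tendsto_coeff_if_tnorm[OF f_tensor v lim, of \<alpha>]]
      tendsto_coeff_if_tnorm[OF f_tensor v lim, of "\<alpha> \<circ> ?t"] f_sym[OF that] by simp
  then show "v \<in> D2 m p q"
    using v by (simp add: D2_iff[OF p q])
qed

lemma D2_eq_slicewise:
  assumes j: "j \<in> {1..n}" and i: "i \<in> {1..n}" and k: "k \<in> {1..n}" and ij: "i \<noteq> j" and kj: "k \<noteq> j"
  shows "(D2 n i k :: ((nat \<Rightarrow> 'i) \<Rightarrow> complex) set)
       = slicewise n j (D2 (n-1) (drop_pos j i) (drop_pos j k))"
proof -
  have i': "drop_pos j i \<in> {1..n-1}" and k': "drop_pos j k \<in> {1..n-1}"
    using drop_pos_in j i k ij kj by auto
  let ?t = "Transposition.transpose i k"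
  let ?t' = "Transposition.transpose (drop_pos j i) (drop_pos j k)"
  have slice_sym: "slice n j a v (\<beta> \<circ> ?t') = v (insert_coord n j a \<beta> \<circ> ?t)"
    if "\<beta> \<in> tuples (n-1)" for v a \<beta>
    using that
    by (simp add: slice_def insert_coord_comp_transpose[OF j i k ij kj] comp_transpose_in_tuples[OF i' k', simplified])
  show ?thesis
  proof (intro set_eqI iffI)
    fix v :: "(nat \<Rightarrow> 'i) \<Rightarrow> complex"
    assume "v \<in> D2 n i k"
    then have v: "v \<in> tensor_space n" and sym: "\<And>\<alpha>. \<alpha> \<in> tuples n \<Longrightarrow> v \<alpha> = v (\<alpha> \<circ> ?t)"
      by (auto simp: D2_iff[OF i k])
    have "slice n j a v \<in> D2 (n-1) (drop_pos j i) (drop_pos j k)" for a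
      unfolding D2_iff[OF i' k']
    proof (intro conjI ballI)
      show "slice n j a v \<in> tensor_space (n-1)"
        by (rule slice_in_tensor_space(1)[OF j v])
      fix \<beta> :: "nat \<Rightarrow> 'i"
      assume \<beta>: "\<beta> \<in> tuples (n-1)"
      then have "slice n j a v \<beta> = v (insert_coord n j a \<beta> \<circ> ?t)"
        using sym[OF insert_coord_in_tuples] by (simp add: slice_def)
      then show "slice n j a v \<beta> = slice n j a v (\<beta> \<circ> ?t')"
        using slice_sym[OF \<beta>] by simp
    qed
    then show "v \<in> slicewise n j (D2 (n-1) (drop_pos j i) (drop_pos j k))"
      using v by (simp add: slicewise_def)
  next
    fix v :: "(nat \<Rightarrow> 'i) \<Rightarrow> complex"
    assume "v \<in> slicewise n j (D2 (n-1) (drop_pos j i) (drop_pos j k))"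
    then have v: "v \<in> tensor_space n"
      and sym: "\<And>a \<beta>. \<beta> \<in> tuples (n-1) \<Longrightarrow> slice n j a v \<beta> = slice n j a v (\<beta> \<circ> ?t')"
      by (auto simp: slicewise_def D2_iff[OF i' k', simplified])
    have "v \<alpha> = v (\<alpha> \<circ> ?t)" if \<alpha>: "\<alpha> \<in> tuples n" for \<alpha>
    proof -
      let ?a = "\<alpha> j" and ?\<beta> = "drop_coord n j \<alpha>"
      have "v \<alpha> = slice n j ?a v ?\<beta>"
        using insert_drop_coord[OF j \<alpha>] by (simp add: slice_def)
      also have "\<dots> = v (insert_coord n j ?a ?\<beta> \<circ> ?t)"
        using sym[of ?\<beta> ?a] slice_sym[of ?\<beta> ?a v] by simp
      also have "\<dots> = v (\<alpha> \<circ> ?t)"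
        by (simp add: insert_drop_coord[OF j \<alpha>])
      finally show ?thesis .
    qed
    then show "v \<in> D2 n i k"
      using v by (simp add: D2_iff[OF i k])
  qed
qed

lemma D2_Int_D2_subset:
  assumes i: "i \<in> {1..n}" and j: "j \<in> {1..n}" and k: "k \<in> {1..n}" and ij: "i \<noteq> j" and kj: "k \<noteq> j"
  shows "D2 n i j \<inter> D2 n j k \<subseteq> D2 n i k"
proof
  fix v assume "v \<in> D2 n i j \<inter> D2 n j k"
  then have v: "v \<in> tensor_space n"
    and sym_ij: "\<And>\<alpha>. \<alpha> \<in> tuples n \<Longrightarrow> v \<alpha> = v (\<alpha> \<circ> Transposition.transpose i j)"
    and sym_jk: "\<And>\<alpha>. \<alpha> \<in> tuples n \<Longrightarrow> v \<alpha> = v (\<alpha> \<circ> Transposition.transpose j k)"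
    by (auto simp: D2_iff[OF i j] D2_iff[OF j k])
  have "v \<alpha> = v (\<alpha> \<circ> Transposition.transpose i k)" if \<alpha>: "\<alpha> \<in> tuples n" for \<alpha>
  proof (cases "i = k")
    case False
    let ?a = "Transposition.transpose i j" and ?b = "Transposition.transpose j k"
    have a: "\<alpha> \<circ> ?a \<in> tuples n" and ab: "\<alpha> \<circ> ?a \<circ> ?b \<in> tuples n"
      using \<alpha> by (simp_all add: comp_transpose_in_tuples[OF i j] comp_transpose_in_tuples[OF j k])
    have "v (\<alpha> \<circ> Transposition.transpose i k) = v (\<alpha> \<circ> ?a \<circ> ?b \<circ> ?a)"
      using transpose_comp_triple[of i k j] False kj by (simp add: comp_assoc)
    also have "\<dots> = v \<alpha>"
      using sym_ij[OF ab] sym_jk[OF a] sym_ij[OF \<alpha>] by simp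
    finally show ?thesis by simp
  qed simp
  then show "v \<in> D2 n i k"
    using v by (simp add: D2_iff[OF i k])
qed

section \<open>Symmetrizing elementary tensors\<close>

lemma D2_sum_comp_transpose:
  assumes i: "i \<in> {1..n}" and j: "j \<in> {1..n}" and v: "v \<in> tensor_space n"
  shows "(\<lambda>\<alpha>. v \<alpha> + v (\<alpha> \<circ> Transposition.transpose i j)) \<in> D2 n i j"
  using tensor_space_add[OF v tensor_space_comp_transpose[OF v i j]]
  by (simp add: D2_iff[OF i j] comp_assoc)

lemma D2_orbit_sum:
  assumes i: "i \<in> {1..n}" and j: "j \<in> {1..n}" and k: "k \<in> {1..n}"
    and ij: "i \<noteq> j" and kj: "k \<noteq> j" and ik: "i \<noteq> k" and v: "v \<in> D2 n i k"
  shows "(\<lambda>\<alpha>. v \<alpha> + v (\<alpha> \<circ> Transposition.transpose i j) + v (\<alpha> \<circ> Transposition.transpose k j))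
         \<in> D2 n i j \<inter> D2 n j k"
proof -
  let ?ij = "Transposition.transpose i j" and ?kj = "Transposition.transpose k j"
    and ?ik = "Transposition.transpose i k"
  define u where "u = (\<lambda>\<alpha>. v \<alpha> + v (\<alpha> \<circ> ?ij) + v (\<alpha> \<circ> ?kj))"
  have v_tensor: "v \<in> tensor_space n"
    and v_sym: "\<And>\<gamma>. \<gamma> \<in> tuples n \<Longrightarrow> v (\<gamma> \<circ> ?ik) = v \<gamma>"
    using v by (auto simp: D2_iff[OF i k])
  have u: "u \<in> tensor_space n"
    unfolding u_def by (intro tensor_space_add tensor_space_comp_transpose v_tensor i j k)
  \<comment> \<open>Thanks to the \<open>(i k)\<close>-symmetry of \<open>v\<close>, both \<open>(i j)\<close> and \<open>(j k)\<close> permute the three summands.\<close>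
  have ij_kj: "?ij \<circ> ?kj = ?kj \<circ> ?ik" and kj_ij: "?kj \<circ> ?ij = ?ij \<circ> ?ik"
    using ij kj ik by (auto simp: fun_eq_iff Transposition.transpose_def)
  have "u \<alpha> = u (\<alpha> \<circ> ?ij)" if \<alpha>: "\<alpha> \<in> tuples n" for \<alpha>
    using v_sym[of "\<alpha> \<circ> ?kj"] \<alpha> ij_kj
    by (simp add: u_def comp_assoc comp_transpose_in_tuples[OF k j])
  moreover have "u \<alpha> = u (\<alpha> \<circ> Transposition.transpose j k)" if \<alpha>: "\<alpha> \<in> tuples n" for \<alpha>
    using v_sym[of "\<alpha> \<circ> ?ij"] \<alpha> kj_ij
    by (simp add: u_def comp_assoc comp_transpose_in_tuples[OF i j] transpose_commute[of j k])
  ultimately have "u \<in> D2 n i j \<inter> D2 n j k"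
    using u by (simp add: D2_iff[OF i j] D2_iff[OF j k])
  then show ?thesis
    by (simp add: u_def)
qed

lemma drop_coord_comp_transpose:
  assumes j: "j \<in> {1..n}" and p: "p \<in> {1..n}" "p \<noteq> j" and \<beta>: "\<beta> \<in> tuples (n-1)"
  shows "drop_coord n j (insert_coord n j a \<beta> \<circ> Transposition.transpose p j) = \<beta>(drop_pos j p := a)"
  using j p \<beta>
  by (auto simp: fun_eq_iff drop_coord_def insert_coord_def drop_pos_def tuples_iff Transposition.transpose_def)

lemma slice_tensor_at_comp_transpose:
  assumes j: "j \<in> {1..n}" and p: "p \<in> {1..n}" "p \<noteq> j" and w: "w \<in> tensor_space (n-1)"
  shows "slice n j a (\<lambda>\<alpha>. tensor_at n j (indicator {a}) w (\<alpha> \<circ> Transposition.transpose p j))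
       = restrict_coord (drop_pos j p) {a} w"
proof
  fix \<beta>
  show "slice n j a (\<lambda>\<alpha>. tensor_at n j (indicator {a}) w (\<alpha> \<circ> Transposition.transpose p j)) \<beta>
      = restrict_coord (drop_pos j p) {a} w \<beta>"
  proof (cases "\<beta> \<in> tuples (n-1)")
    case True
    have "insert_coord n j a \<beta> \<circ> Transposition.transpose p j \<in> tuples n"
      by (simp add: comp_transpose_in_tuples[OF p(1) j] insert_coord_in_tuples)
    moreover have "(insert_coord n j a \<beta> \<circ> Transposition.transpose p j) j = \<beta> (drop_pos j p)"
      using p j by (simp add: insert_coord_def)
    ultimately show ?thesis
      using True drop_coord_comp_transpose[OF j p True, of a]
      by (auto simp: slice_def tensor_at_def restrict_coord_def indicator_def fun_upd_idem)
  next
    case False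
    then show ?thesis
      using tensor_space_zero_outside[OF w False] by (simp add: slice_def restrict_coord_def)
  qed
qed

section \<open>Recovering \<open>T\<close> from \<open>D(i,j) \<inter> D(j,k) \<subseteq> H\<^sub>j \<otimes> T\<close>\<close>

lemma restrict_coord_pair_in_D2:
  assumes p: "p \<in> {1..m}" and q: "q \<in> {1..m}" and w: "w \<in> D2 m p q"
  shows "(\<lambda>\<beta>. restrict_coord p F w \<beta> + restrict_coord q F w \<beta>) \<in> D2 m p q"
    and "restrict_coord p F (restrict_coord q F w) \<in> D2 m p q"
proof -
  have w_tensor: "w \<in> tensor_space m"
    and sym: "\<And>\<beta>. \<beta> \<in> tuples m \<Longrightarrow> w \<beta> = w (\<beta> \<circ> Transposition.transpose p q)"
    using w by (auto simp: D2_iff[OF p q])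
  show "(\<lambda>\<beta>. restrict_coord p F w \<beta> + restrict_coord q F w \<beta>) \<in> D2 m p q"
    using sym tensor_space_add[OF tensor_space_restrict_coord tensor_space_restrict_coord, OF w_tensor w_tensor]
    by (auto simp: D2_iff[OF p q] restrict_coord_def)
  show "restrict_coord p F (restrict_coord q F w) \<in> D2 m p q"
    using sym tensor_space_restrict_coord[OF tensor_space_restrict_coord[OF w_tensor]]
    by (auto simp: D2_iff[OF p q] restrict_coord_def)
qed

lemma subset_if_restrict_coord_sum_in:
  assumes T: "closed_subspace m T"
    and W: "\<And>w. w \<in> W \<Longrightarrow> restrict_coord p F w \<in> W"
    and image: "\<And>w. w \<in> W \<Longrightarrow> (\<lambda>\<beta>. w \<beta> + restrict_coord p F w \<beta>) \<in> T"
  shows "W \<subseteq> T"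
proof
  fix w assume w: "w \<in> W"
  let ?L = "\<lambda>w \<beta>. w \<beta> + restrict_coord p F w \<beta>"
  have "(\<lambda>\<beta>. ?L w \<beta> + (-1/2) * ?L (restrict_coord p F w) \<beta>) \<in> T"
    by (rule closed_subspaceD(3)[OF T image[OF w] closed_subspaceD(4)[OF T image[OF W[OF w]]]])
  moreover have "(\<lambda>\<beta>. ?L w \<beta> + (-1/2) * ?L (restrict_coord p F w) \<beta>) = w"
    by (auto simp: fun_eq_iff restrict_coord_def)
  ultimately show "w \<in> T" by simp
qed

text \<open>For commuting projections \<open>P, Q\<close>: \<open>(1 + P + Q)\<^sup>-\<^sup>1 = 1 - (P + Q)/2 + PQ/3\<close>.\<close>

lemma subset_if_restrict_coord_pair_sum_in:
  assumes T: "closed_subspace m T"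
    and W_sum: "\<And>w. w \<in> W \<Longrightarrow> (\<lambda>\<beta>. restrict_coord p F w \<beta> + restrict_coord q F w \<beta>) \<in> W"
    and W_prod: "\<And>w. w \<in> W \<Longrightarrow> restrict_coord p F (restrict_coord q F w) \<in> W"
    and image: "\<And>w. w \<in> W \<Longrightarrow> (\<lambda>\<beta>. w \<beta> + restrict_coord p F w \<beta> + restrict_coord q F w \<beta>) \<in> T"
  shows "W \<subseteq> T"
proof
  fix w assume w: "w \<in> W"
  let ?L = "\<lambda>w \<beta>. w \<beta> + restrict_coord p F w \<beta> + restrict_coord q F w \<beta>"
  let ?sum = "\<lambda>\<beta>. restrict_coord p F w \<beta> + restrict_coord q F w \<beta>"
    and ?prod = "restrict_coord p F (restrict_coord q F w)"
  have "(\<lambda>\<beta>. ?L w \<beta> + ((-1/2) * ?L ?sum \<beta> + (1/3) * ?L ?prod \<beta>)) \<in> T"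
    by (intro closed_subspaceD(3,4)[OF T] image W_sum W_prod w)
  moreover have "(\<lambda>\<beta>. ?L w \<beta> + ((-1/2) * ?L ?sum \<beta> + (1/3) * ?L ?prod \<beta>)) = w"
    by (auto simp: fun_eq_iff restrict_coord_def field_simps)
  ultimately show "w \<in> T" by simp
qed

lemma tensor_space_subset_if_D2_subset_slicewise:
  fixes T :: "((nat \<Rightarrow> 'i) \<Rightarrow> complex) set"
  assumes i: "i \<in> {1..n}" and j: "j \<in> {1..n}" and ij: "i \<noteq> j"
    and T: "closed_subspace (n-1) T" and H: "D2 n i j \<subseteq> slicewise n j T"
  shows "tensor_space (n-1) \<subseteq> T"
proof (rule subset_if_restrict_coord_sum_in[OF T, where p = "drop_pos j i" and F = "{undefined}"])
  let ?a = "undefined :: 'i"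
  fix w :: "(nat \<Rightarrow> 'i) \<Rightarrow> complex"
  assume w: "w \<in> tensor_space (n-1)"
  then show "restrict_coord (drop_pos j i) {?a} w \<in> tensor_space (n-1)"
    by (rule tensor_space_restrict_coord)
  define e where "e = tensor_at n j (indicator {?a}) w"
  have e: "e \<in> tensor_space n"
    unfolding e_def by (rule tensor_at_in_tensor_space[OF j indicator_in_l2_space w])
  have "slice n j ?a (\<lambda>\<alpha>. e \<alpha> + e (\<alpha> \<circ> Transposition.transpose i j))
      = (\<lambda>\<beta>. w \<beta> + restrict_coord (drop_pos j i) {?a} w \<beta>)"
    unfolding e_def slice_add slice_tensor_at[OF j w] slice_tensor_at_comp_transpose[OF j i ij w]
    by simp
  moreover have "slice n j ?a (\<lambda>\<alpha>. e \<alpha> + e (\<alpha> \<circ> Transposition.transpose i j)) \<in> T"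
    using H D2_sum_comp_transpose[OF i j e] unfolding slicewise_def by blast
  ultimately show "(\<lambda>\<beta>. w \<beta> + restrict_coord (drop_pos j i) {?a} w \<beta>) \<in> T"
    by simp
qed

lemma D2_drop_subset_if_Int_subset_slicewise:
  fixes T :: "((nat \<Rightarrow> 'i) \<Rightarrow> complex) set"
  assumes i: "i \<in> {1..n}" and j: "j \<in> {1..n}" and k: "k \<in> {1..n}"
    and ij: "i \<noteq> j" and kj: "k \<noteq> j" and ik: "i \<noteq> k"
    and T: "closed_subspace (n-1) T" and H: "D2 n i j \<inter> D2 n j k \<subseteq> slicewise n j T"
  shows "D2 (n-1) (drop_pos j i) (drop_pos j k) \<subseteq> T"
proof (rule subset_if_restrict_coord_pair_sum_in[OF T, where F = "{undefined}"])
  let ?a = "undefined :: 'i" and ?i' = "drop_pos j i" and ?k' = "drop_pos j k"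
  have i': "?i' \<in> {1..n-1}" and k': "?k' \<in> {1..n-1}"
    using drop_pos_in j i k ij kj by auto
  fix w :: "(nat \<Rightarrow> 'i) \<Rightarrow> complex"
  assume w: "w \<in> D2 (n-1) ?i' ?k'"
  then show "(\<lambda>\<beta>. restrict_coord ?i' {?a} w \<beta> + restrict_coord ?k' {?a} w \<beta>) \<in> D2 (n-1) ?i' ?k'"
    and "restrict_coord ?i' {?a} (restrict_coord ?k' {?a} w) \<in> D2 (n-1) ?i' ?k'"
    by (rule restrict_coord_pair_in_D2[OF i' k'])+
  have w_tensor: "w \<in> tensor_space (n-1)"
    using w D2_iff[OF i' k'] by blast
  define e where "e = tensor_at n j (indicator {?a}) w"
  have "e \<in> slicewise n j (D2 (n-1) ?i' ?k')"
    using closed_subspaceD(4)[OF closed_subspace_D2[OF i' k'] w]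
      tensor_at_in_tensor_space[OF j indicator_in_l2_space w_tensor]
    by (simp add: e_def slicewise_def slice_tensor_at[OF j w_tensor])
  then have e: "e \<in> D2 n i k"
    by (simp add: D2_eq_slicewise[OF j i k ij kj])
  have "slice n j ?a (\<lambda>\<alpha>. e \<alpha> + e (\<alpha> \<circ> Transposition.transpose i j) + e (\<alpha> \<circ> Transposition.transpose k j))
      = (\<lambda>\<beta>. w \<beta> + restrict_coord ?i' {?a} w \<beta> + restrict_coord ?k' {?a} w \<beta>)"
    unfolding e_def slice_add slice_tensor_at[OF j w_tensor]
      slice_tensor_at_comp_transpose[OF j i ij w_tensor] slice_tensor_at_comp_transpose[OF j k kj w_tensor]
    by simp
  moreover have "slice n j ?a (\<lambda>\<alpha>. e \<alpha> + e (\<alpha> \<circ> Transposition.transpose i j) + e (\<alpha> \<circ> Transposition.transpose k j))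
      \<in> T"
    using H D2_orbit_sum[OF i j k ij kj ik e] unfolding slicewise_def by blast
  ultimately show "(\<lambda>\<beta>. w \<beta> + restrict_coord ?i' {?a} w \<beta> + restrict_coord ?k' {?a} w \<beta>) \<in> T"
    by simp
qed

theorem mainTheorem14:
  fixes n i j k :: nat
  assumes "n \<ge> 2"
    and "i \<in> {1..n}" and "j \<in> {1..n}" and "k \<in> {1..n}"
    and "j \<noteq> i" and "j \<noteq> k"
  shows "is_cyl n j (D2 n i k :: ((nat \<Rightarrow> 'i) \<Rightarrow> complex) set) \<and>
         (D2 n i k :: ((nat \<Rightarrow> 'i) \<Rightarrow> complex) set) = ex_H n j (D2 n i j \<inter> D2 n j k)"
proof -
  have i: "i \<in> {1..n}" and j: "j \<in> {1..n}" and k: "k \<in> {1..n}" and ij: "i \<noteq> j" and kj: "k \<noteq> j"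
    using assms by auto
  let ?D' = "D2 (n-1) (drop_pos j i) (drop_pos j k) :: ((nat \<Rightarrow> 'i) \<Rightarrow> complex) set"
  have D': "closed_subspace (n-1) ?D'"
    using closed_subspace_D2 drop_pos_in i j k ij kj by blast
  have D_slicewise: "D2 n i k = slicewise n j ?D'"
    by (rule D2_eq_slicewise[OF j i k ij kj])
  have "ex_H n j (D2 n i j \<inter> D2 n j k) = slicewise n j ?D'"
  proof (rule ex_H_eq_slicewise[OF j D'])
    show "D2 n i j \<inter> D2 n j k \<subseteq> slicewise n j ?D'"
      unfolding D_slicewise[symmetric] by (rule D2_Int_D2_subset[OF i j k ij kj])
    fix T :: "((nat \<Rightarrow> 'i) \<Rightarrow> complex) set"
    assume T: "closed_subspace (n-1) T" and H: "D2 n i j \<inter> D2 n j k \<subseteq> slicewise n j T"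
    show "?D' \<subseteq> T"
    proof (cases "i = k")
      case True
      then have "D2 n i j \<subseteq> slicewise n j T" and "?D' = tensor_space (n-1)"
        using H D2_same[OF drop_pos_in[OF j i ij]] by (simp_all add: D2_def insert_commute)
      then show ?thesis
        using tensor_space_subset_if_D2_subset_slicewise[OF i j ij T] by simp
    qed (rule D2_drop_subset_if_Int_subset_slicewise[OF i j k ij kj _ T H])
  qed
  then show ?thesis
    using D_slicewise is_cyl_slicewise[OF j D'] by simp
qed

end
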